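(* Let $U$ be a finite-dimensional complex vector space with basis $\mathbb B$, $w:U\to U$ linear, and $A=[w]_{(\mathbb B,\preceq)}$ the matrix of $w$ with respect to an arbitrary total ordering $\preceq$ of $\mathbb B$. Then $w$ acts on $(U,\mathbb B)$ by some bijection up to lower-order terms if and only if there exist permutation matrices $P_1,P_2$ such that $P_1AP_2$ is an upper-triangular integer matrix whose diagonal entries are all $\pm1$.
   Context: $w$ acts on $(U,\mathbb B)$ by some bijection up to lower-order terms if there exist a bijection $\xi:\mathbb B\to\mathbb B$ and a preorder $\le$ on $\mathbb B$ such that for every $x\in\mathbb B$ there are integers $a_y$ with $w(x)=\pm\xi(x)+\sum_{y<x}a_y\xi(y)$, the sign depending only on the equivalence class of $x$ under the equivalence relation induced by $\le$. *)

theory Defs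
  imports "HOL-Analysis.Analysis" "Jordan_Normal_Form.Matrix"
begin

definition acts_by_bij_up_to_lower ::
  "(complex \<Rightarrow> 'u::ab_group_add \<Rightarrow> 'u) \<Rightarrow> 'u set \<Rightarrow> ('u \<Rightarrow> 'u) \<Rightarrow> bool" where
  "acts_by_bij_up_to_lower scl B w \<longleftrightarrow>
    (\<exists>\<xi> R sgn.
       bij_betw \<xi> B B \<and> preorder_on B R \<and>
       (\<forall>x\<in>B. sgn x = (1::int) \<or> sgn x = -1) \<and>
       (\<forall>x\<in>B. \<forall>y\<in>B. (x, y) \<in> R \<and> (y, x) \<in> R \<longrightarrow> sgn x = sgn y) \<and>
       (\<forall>x\<in>B. \<exists>a :: 'u \<Rightarrow> int.
          w x = scl (of_int (sgn x)) (\<xi> x) +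
                (\<Sum>y\<in>{y\<in>B. (y, x) \<in> R \<and> (x, y) \<notin> R}. scl (of_int (a y)) (\<xi> y))))"

text \<open>Matrix of \<open>w\<close> with respect to the basis \<open>B\<close> ordered by the enumeration
  \<open>e : {0..<card B} \<rightarrow> B\<close> (i.e. \<open>e 0 \<prec> e 1 \<prec> \<dots>\<close>): column \<open>j\<close> holds the coordinates of \<open>w (e j)\<close>.\<close>
definition matrix_wrt ::
  "(complex \<Rightarrow> 'u::ab_group_add \<Rightarrow> 'u) \<Rightarrow> 'u set \<Rightarrow> (nat \<Rightarrow> 'u) \<Rightarrow> ('u \<Rightarrow> 'u) \<Rightarrow> complex mat" where
  "matrix_wrt scl B e w =
     mat (card B) (card B) (\<lambda>(i, j). module.representation scl B (w (e j)) (e i))"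

definition perm_matrix :: "nat \<Rightarrow> (nat \<Rightarrow> nat) \<Rightarrow> complex mat" where
  "perm_matrix n \<sigma> = mat n n (\<lambda>(i, j). if i = \<sigma> j then 1 else 0)"

definition is_permutation_matrix :: "nat \<Rightarrow> complex mat \<Rightarrow> bool" where
  "is_permutation_matrix n P \<longleftrightarrow> (\<exists>\<sigma>. \<sigma> permutes {..<n} \<and> P = perm_matrix n \<sigma>)"

definition upper_unitriangular_int_pm :: "complex mat \<Rightarrow> bool" where
  "upper_unitriangular_int_pm M \<longleftrightarrow>
     dim_row M = dim_col M \<and> upper_triangular M \<and>
     (\<forall>i < dim_row M. \<forall>j < dim_col M. M $$ (i, j) \<in> \<int>) \<and>
     (\<forall>i < dim_row M. M $$ (i, i) = 1 \<or> M $$ (i, i) = -1)"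

end

theory Submission
  imports Defs
begin

text \<open>Both conditions say that, after enumerating the source basis vectors and their images
  suitably, the coordinate array of \<open>w\<close> is upper triangular with integer entries and diagonal
  \<open>\<plusminus>1\<close>. Given \<open>\<xi>\<close> and the preorder, enumerate the sources \<open>x\<close> along a linear extension of the
  preorder and the targets as the corresponding \<open>\<xi> x\<close>. Conversely, from such enumerations \<open>g\<close>
  (sources) and \<open>h\<close> (targets), \<open>\<xi> = h \<circ> g\<^sup>-\<^sup>1\<close> and the order pulled back along \<open>g\<close> witness the action.
  Multiplying \<open>A\<close> by permutation matrices on both sides is exactly re-enumerating targets
  and sources.\<close>

definition upper_unitriangular_int_pm_on :: "nat \<Rightarrow> (nat \<Rightarrow> nat \<Rightarrow> 'a::ring_1) \<Rightarrow> bool" where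
  "upper_unitriangular_int_pm_on n c \<longleftrightarrow>
     (\<forall>i<n. \<forall>j<n. c i j \<in> \<int> \<and> (j < i \<longrightarrow> c i j = 0)) \<and>
     (\<forall>i<n. c i i = 1 \<or> c i i = -1)"

lemma upper_unitriangular_int_pm_on_cong:
  assumes "\<And>i j. i < n \<Longrightarrow> j < n \<Longrightarrow> c i j = d i j"
  shows "upper_unitriangular_int_pm_on n c \<longleftrightarrow> upper_unitriangular_int_pm_on n d"
  using assms by (simp add: upper_unitriangular_int_pm_on_def)

lemma upper_unitriangular_int_pm_iff_on:
  assumes "M \<in> carrier_mat n n"
  shows "upper_unitriangular_int_pm M \<longleftrightarrow> upper_unitriangular_int_pm_on n (\<lambda>i j. M $$ (i, j))"
  using assms
  by (auto simp: upper_unitriangular_int_pm_def upper_unitriangular_int_pm_on_def upper_triangular_def)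

lemma perm_matrix_carrier [simp]: "perm_matrix n \<sigma> \<in> carrier_mat n n"
  unfolding perm_matrix_def by (rule mat_carrier)

lemma index_perm_matrix_mult_perm_matrix:
  assumes \<sigma>: "\<sigma> permutes {..<n}" and \<tau>: "\<tau> permutes {..<n}"
    and M: "M \<in> carrier_mat n n" and i: "i < n" and j: "j < n"
  shows "(perm_matrix n \<sigma> * M * perm_matrix n \<tau>) $$ (i, j) = M $$ (Hilbert_Choice.inv \<sigma> i, \<tau> j)"
proof -
  have \<tau>j: "\<tau> j < n" and \<sigma>i: "Hilbert_Choice.inv \<sigma> i < n"
    using permutes_in_image[OF \<tau>] permutes_in_image[OF permutes_inv[OF \<sigma>]] i j by auto
  have row: "(if i = \<sigma> k then 1 else 0) * x = (if k = Hilbert_Choice.inv \<sigma> i then x else 0)"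
    for k and x :: complex
    using permutes_inverses[OF \<sigma>] by auto
  have "(perm_matrix n \<sigma> * M * perm_matrix n \<tau>) $$ (i, j)
      = (\<Sum>k<n. (perm_matrix n \<sigma> * M) $$ (i, k) * (if k = \<tau> j then 1 else 0))"
    using M i j by (simp add: perm_matrix_def scalar_prod_def atLeast0LessThan)
  also have "\<dots> = (perm_matrix n \<sigma> * M) $$ (i, \<tau> j)"
    using \<tau>j by (simp add: if_distrib cong: if_cong)
  also have "\<dots> = (\<Sum>k<n. if k = Hilbert_Choice.inv \<sigma> i then M $$ (k, \<tau> j) else 0)"
    using M i \<tau>j by (simp add: perm_matrix_def scalar_prod_def atLeast0LessThan row)
  also have "\<dots> = M $$ (Hilbert_Choice.inv \<sigma> i, \<tau> j)"
    using \<sigma>i by simp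
  finally show ?thesis .
qed

lemma ex_perm_matrices_upper_unitriangular_int_pm_iff:
  assumes A: "A \<in> carrier_mat n n"
  shows "(\<exists>P1 P2. is_permutation_matrix n P1 \<and> is_permutation_matrix n P2 \<and>
            upper_unitriangular_int_pm (P1 * A * P2)) \<longleftrightarrow>
         (\<exists>p q. p permutes {..<n} \<and> q permutes {..<n} \<and>
            upper_unitriangular_int_pm_on n (\<lambda>i j. A $$ (p i, q j)))"
proof -
  have permuted: "upper_unitriangular_int_pm (perm_matrix n \<sigma> * A * perm_matrix n \<tau>) \<longleftrightarrow>
      upper_unitriangular_int_pm_on n (\<lambda>i j. A $$ (Hilbert_Choice.inv \<sigma> i, \<tau> j))"
    if "\<sigma> permutes {..<n}" "\<tau> permutes {..<n}" for \<sigma> \<tau>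
  proof -
    have "perm_matrix n \<sigma> * A * perm_matrix n \<tau> \<in> carrier_mat n n"
      using A by (meson mult_carrier_mat perm_matrix_carrier)
    then show ?thesis
      using index_perm_matrix_mult_perm_matrix[OF that A]
      by (simp add: upper_unitriangular_int_pm_iff_on cong: upper_unitriangular_int_pm_on_cong)
  qed
  show ?thesis
  proof
    assume "\<exists>P1 P2. is_permutation_matrix n P1 \<and> is_permutation_matrix n P2 \<and>
              upper_unitriangular_int_pm (P1 * A * P2)"
    then obtain \<sigma> \<tau> where "\<sigma> permutes {..<n}" "\<tau> permutes {..<n}"
      "upper_unitriangular_int_pm (perm_matrix n \<sigma> * A * perm_matrix n \<tau>)"
      unfolding is_permutation_matrix_def by blast
    then show "\<exists>p q. p permutes {..<n} \<and> q permutes {..<n} \<and>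
                 upper_unitriangular_int_pm_on n (\<lambda>i j. A $$ (p i, q j))"
      using permuted permutes_inv by blast
  next
    assume "\<exists>p q. p permutes {..<n} \<and> q permutes {..<n} \<and>
              upper_unitriangular_int_pm_on n (\<lambda>i j. A $$ (p i, q j))"
    then obtain p q where p: "p permutes {..<n}" and q: "q permutes {..<n}"
      and U: "upper_unitriangular_int_pm_on n (\<lambda>i j. A $$ (p i, q j))"
      by blast
    have "upper_unitriangular_int_pm (perm_matrix n (Hilbert_Choice.inv p) * A * perm_matrix n q)"
      using permuted[OF permutes_inv[OF p] q] U permutes_inv_inv[OF p] by simp
    then show "\<exists>P1 P2. is_permutation_matrix n P1 \<and> is_permutation_matrix n P2 \<and>
                 upper_unitriangular_int_pm (P1 * A * P2)"
      using p q permutes_inv[OF p] unfolding is_permutation_matrix_def by blast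
  qed
qed

lemma bij_betw_lessThan_factor_permutes:
  assumes e: "bij_betw e {..<n} B" and g: "bij_betw g {..<n} B"
  obtains q where "q permutes {..<n}" "\<And>i. i < n \<Longrightarrow> g i = e (q i)"
proof -
  define q where "q i = (if i < n then inv_into {..<n} e (g i) else i)" for i
  have "bij_betw (inv_into {..<n} e \<circ> g) {..<n} {..<n}"
    using bij_betw_trans[OF g bij_betw_inv_into[OF e]] .
  then have "bij_betw q {..<n} {..<n}"
    by (rule bij_betw_cong[THEN iffD1, rotated]) (simp add: q_def)
  then have "q permutes {..<n}"
    by (rule bij_imp_permutes) (simp add: q_def)
  moreover have "g i = e (q i)" if "i < n" for i
    using that bij_betw_inv_into_right[OF e] bij_betw_apply[OF g] by (simp add: q_def)
  ultimately show ?thesis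
    by (rule that)
qed

lemma bij_betw_inv_into_less_image:
  fixes n :: nat
  assumes g: "bij_betw g {..<n} B" and k: "k \<le> n"
  shows "{y \<in> B. inv_into {..<n} g y < k} = g ` {..<k}"
proof
  show "{y \<in> B. inv_into {..<n} g y < k} \<subseteq> g ` {..<k}"
    using bij_betw_inv_into_right[OF g] by (auto intro: rev_image_eqI)
  show "g ` {..<k} \<subseteq> {y \<in> B. inv_into {..<n} g y < k}"
  proof
    fix y
    assume "y \<in> g ` {..<k}"
    then obtain l where "l < k" "y = g l"
      by blast
    moreover have "l < n"
      using \<open>l < k\<close> k by simp
    ultimately show "y \<in> {y \<in> B. inv_into {..<n} g y < k}"
      using bij_betw_inv_into_left[OF g] bij_betw_apply[OF g] by simp
  qed
qed

lemma finite_enumeration_sorted_by_key: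
  fixes key :: "'a \<Rightarrow> 'b::linorder"
  assumes "finite A"
  obtains f where "bij_betw f {..<card A} A"
    and "\<And>i j. i < card A \<Longrightarrow> j < card A \<Longrightarrow> key (f i) < key (f j) \<Longrightarrow> i < j"
proof -
  obtain xs where xs: "set xs = A" "distinct xs"
    using finite_distinct_list[OF assms] by blast
  define ys where "ys = sort_key key xs"
  have ys: "set ys = A" "distinct ys" "length ys = card A" "sorted (map key ys)"
    using xs distinct_card[OF xs(2)] by (simp_all add: ys_def)
  have "bij_betw ((!) ys) {..<card A} A"
    using ys by (intro bij_betw_nth) simp_all
  moreover have "i < j" if "i < card A" "j < card A" "key (ys ! i) < key (ys ! j)" for i j
  proof (rule ccontr)
    assume "\<not> i < j"
    then have "key (ys ! j) \<le> key (ys ! i)"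
      using sorted_nth_mono[OF ys(4), of j i] that(1) ys(3) by simp
    then show False
      using that(3) by simp
  qed
  ultimately show ?thesis
    by (rule that)
qed

lemma finite_enumeration_extending_strict_part:
  assumes "finite A" and "trans R"
  obtains f where "bij_betw f {..<card A} A"
    and "\<And>i j. i < card A \<Longrightarrow> j < card A \<Longrightarrow> (f i, f j) \<in> R \<Longrightarrow> (f j, f i) \<notin> R \<Longrightarrow> i < j"
proof -
  define below where "below x = {y \<in> A. (y, x) \<in> R \<and> (x, y) \<notin> R}" for x
  have below_less: "card (below y) < card (below x)"
    if "y \<in> A" "(y, x) \<in> R" "(x, y) \<notin> R" for x y
  proof (rule psubset_card_mono)
    show "finite (below x)"
      using \<open>finite A\<close> by (simp add: below_def)
    have "below y \<subseteq> below x"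
    proof
      fix z
      assume "z \<in> below y"
      then have z: "z \<in> A" "(z, y) \<in> R" "(y, z) \<notin> R"
        by (simp_all add: below_def)
      have "(z, x) \<in> R"
        using transD[OF \<open>trans R\<close> z(2) that(2)] .
      moreover have "(x, z) \<notin> R"
        using transD[OF \<open>trans R\<close> _ z(2)] that(3) by blast
      ultimately show "z \<in> below x"
        using z(1) by (simp add: below_def)
    qed
    moreover have "y \<in> below x - below y"
      using that by (simp add: below_def)
    ultimately show "below y \<subset> below x"
      by blast
  qed
  obtain f where f: "bij_betw f {..<card A} A"
    and sorted: "\<And>i j. i < card A \<Longrightarrow> j < card A \<Longrightarrow> card (below (f i)) < card (below (f j)) \<Longrightarrow> i < j"
    using finite_enumeration_sorted_by_key[OF \<open>finite A\<close>, of "\<lambda>x. card (below x)"] by blast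
  have "i < j" if "i < card A" "j < card A" "(f i, f j) \<in> R" "(f j, f i) \<notin> R" for i j
    using sorted[OF that(1,2)] below_less[OF bij_betw_apply[OF f] that(3,4)] that(1) by simp
  with f show ?thesis
    by (rule that)
qed

context finite_dimensional_vector_space
begin

lemma representation_expansion:
  assumes "bij_betw h I Basis"
  shows "v = (\<Sum>i\<in>I. representation Basis v (h i) *s h i)"
proof -
  have "v = (\<Sum>b\<in>Basis. representation Basis v b *s b)"
    using sum_representation_eq[OF independent_Basis _ finite_Basis] span_Basis by simp
  also have "\<dots> = (\<Sum>i\<in>I. representation Basis v (h i) *s h i)"
    using sum.reindex_bij_betw[OF assms, of "\<lambda>b. representation Basis v b *s b"] by simp
  finally show ?thesis .
qed

lemma representation_upper_unitriangular_column:
  assumes h: "bij_betw h {..<card Basis} Basis" and k: "k < card Basis"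
    and U: "upper_unitriangular_int_pm_on (card Basis) (\<lambda>i j. representation Basis (f j) (h i))"
  obtains a :: "nat \<Rightarrow> int"
  where "f k = representation Basis (f k) (h k) *s h k + (\<Sum>l<k. of_int (a l) *s h l)"
proof -
  have "\<forall>l. \<exists>m. l < card Basis \<longrightarrow> representation Basis (f k) (h l) = of_int m"
    using U k by (meson Ints_cases upper_unitriangular_int_pm_on_def)
  then obtain a where a: "\<And>l. l < card Basis \<Longrightarrow> representation Basis (f k) (h l) = of_int (a l)"
    by metis
  have "f k = (\<Sum>l<card Basis. representation Basis (f k) (h l) *s h l)"
    using representation_expansion[OF h] .
  also have "\<dots> = (\<Sum>l<Suc k. representation Basis (f k) (h l) *s h l)"
    using U k by (intro sum.mono_neutral_right) (auto simp: upper_unitriangular_int_pm_on_def)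
  also have "\<dots> = representation Basis (f k) (h k) *s h k + (\<Sum>l<k. of_int (a l) *s h l)"
    using k a by (simp add: add.commute)
  finally show ?thesis
    by (rule that)
qed

lemma representation_leading_plus_lower:
  assumes \<xi>: "inj_on \<xi> Basis" "\<xi> ` Basis \<subseteq> Basis"
    and x: "x \<in> Basis" and z: "z \<in> Basis" and S: "S \<subseteq> Basis" "x \<notin> S"
  shows "representation Basis (s *s \<xi> x + (\<Sum>y\<in>S. a y *s \<xi> y)) (\<xi> z) =
    (if z = x then s else if z \<in> S then a z else 0)"
proof -
  have span: "u \<in> span Basis" for u
    using span_Basis by simp
  have basis: "representation Basis (\<xi> y) (\<xi> z) = (if z = y then 1 else 0)" if "y \<in> Basis" for y
    using representation_basis[OF independent_Basis] \<xi> that z by (auto simp: inj_on_eq_iff)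
  have "finite S"
    using S(1) finite_Basis by (rule finite_subset)
  then show ?thesis
    using x S basis
    by (auto simp: representation_add[OF independent_Basis span span] representation_scale[OF independent_Basis span]
        representation_sum[OF independent_Basis span] subset_iff if_distrib[of "\<lambda>c. a _ * c"] cong: if_cong)
qed

end

lemma acts_by_bij_up_to_lower_if_ranked:
  fixes scl :: "complex \<Rightarrow> 'u::ab_group_add \<Rightarrow> 'u" and rank :: "'u \<Rightarrow> nat"
  assumes \<xi>: "bij_betw \<xi> B B" and rank: "inj_on rank B"
    and \<epsilon>: "\<And>x. x \<in> B \<Longrightarrow> \<epsilon> x = 1 \<or> \<epsilon> x = -1"
    and w: "\<And>x. x \<in> B \<Longrightarrow> \<exists>a::'u \<Rightarrow> int. w x = scl (of_int (\<epsilon> x)) (\<xi> x) +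
        (\<Sum>y\<in>{y \<in> B. rank y < rank x}. scl (of_int (a y)) (\<xi> y))"
  shows "acts_by_bij_up_to_lower scl B w"
proof -
  define R where "R = {(x, y) \<in> B \<times> B. rank x \<le> rank y}"
  have "preorder_on B R"
    by (auto simp: R_def preorder_on_def refl_on_def trans_def)
  moreover have "\<epsilon> x = \<epsilon> y" if "(x, y) \<in> R \<and> (y, x) \<in> R" for x y
    using that rank by (auto simp: R_def dest: inj_onD)
  moreover have "{y \<in> B. (y, x) \<in> R \<and> (x, y) \<notin> R} = {y \<in> B. rank y < rank x}" if "x \<in> B" for x
    using that by (auto simp: R_def)
  ultimately show ?thesis
    unfolding acts_by_bij_up_to_lower_def using \<xi> \<epsilon> w
    by (intro exI[of _ \<xi>] exI[of _ R] exI[of _ \<epsilon>]) simp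
qed

lemma acts_by_bij_up_to_lower_if_upper_unitriangular:
  fixes scl :: "complex \<Rightarrow> 'u::ab_group_add \<Rightarrow> 'u"
  assumes "finite_dimensional_vector_space scl B"
    and g: "bij_betw g {..<card B} B" and h: "bij_betw h {..<card B} B"
    and U: "upper_unitriangular_int_pm_on (card B) (\<lambda>i j. module.representation scl B (w (g j)) (h i))"
  shows "acts_by_bij_up_to_lower scl B w"
proof -
  interpret finite_dimensional_vector_space scl B by fact
  let ?n = "card B"
  define idx where "idx = inv_into {..<?n} g"
  have idx: "bij_betw idx B {..<?n}"
    unfolding idx_def using g by (rule bij_betw_inv_into)
  have g_idx: "g (idx x) = x" if "x \<in> B" for x
    using that bij_betw_inv_into_right[OF g] by (simp add: idx_def)
  have idx_g: "idx (g k) = k" if "k < ?n" for k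
    using that bij_betw_inv_into_left[OF g] by (simp add: idx_def)
  define \<xi> where "\<xi> = h \<circ> idx"
  define \<epsilon> where "\<epsilon> x = (if representation B (w x) (\<xi> x) = 1 then 1 else -1 :: int)" for x
  show ?thesis
  proof (rule acts_by_bij_up_to_lower_if_ranked[of \<xi> B idx \<epsilon>])
    show "bij_betw \<xi> B B"
      unfolding \<xi>_def using bij_betw_trans[OF idx h] .
    show "inj_on idx B"
      using idx by (rule bij_betw_imp_inj_on)
    show "\<epsilon> x = 1 \<or> \<epsilon> x = -1" for x
      by (simp add: \<epsilon>_def)
    fix x
    assume x: "x \<in> B"
    define k where "k = idx x"
    have k: "k < ?n" "g k = x"
      using x bij_betw_apply[OF idx] g_idx by (simp_all add: k_def)
    have lower: "{y \<in> B. idx y < idx x} = g ` {..<k}"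
      using bij_betw_inv_into_less_image[OF g, of k] k(1) by (simp add: idx_def k_def)
    obtain c
      where c: "w x = scl (representation B (w x) (h k)) (h k) + (\<Sum>l<k. scl (of_int (c l)) (h l))"
      using representation_upper_unitriangular_column[OF h k(1) U] k(2) by blast
    have "representation B (w x) (h k) = of_int (\<epsilon> x)"
      using U k by (auto simp: upper_unitriangular_int_pm_on_def \<epsilon>_def \<xi>_def k_def)
    moreover have "h k = \<xi> x"
      by (simp add: \<xi>_def k_def)
    moreover have "(\<Sum>l<k. scl (of_int (c l)) (h l)) = (\<Sum>y\<in>g ` {..<k}. scl (of_int (c (idx y))) (\<xi> y))"
      using k inj_on_subset[OF bij_betw_imp_inj_on[OF g]] idx_g by (simp add: sum.reindex \<xi>_def)
    ultimately have "w x = scl (of_int (\<epsilon> x)) (\<xi> x) +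
        (\<Sum>y\<in>{y \<in> B. idx y < idx x}. scl (of_int (c (idx y))) (\<xi> y))"
      using c unfolding lower by simp
    then show "\<exists>a. w x = scl (of_int (\<epsilon> x)) (\<xi> x) +
        (\<Sum>y\<in>{y \<in> B. idx y < idx x}. scl (of_int (a y)) (\<xi> y))"
      by (rule exI[of _ "\<lambda>y. c (idx y)"])
  qed
qed

lemma upper_unitriangular_if_leading_plus_lower:
  fixes scl :: "complex \<Rightarrow> 'u::ab_group_add \<Rightarrow> 'u"
  assumes "finite_dimensional_vector_space scl B"
    and \<xi>: "bij_betw \<xi> B B" and "trans R"
    and \<epsilon>: "\<And>x. x \<in> B \<Longrightarrow> \<epsilon> x = 1 \<or> \<epsilon> x = -1"
    and w: "\<And>x. x \<in> B \<Longrightarrow> w x = scl (of_int (\<epsilon> x)) (\<xi> x) +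
        (\<Sum>y\<in>{y \<in> B. (y, x) \<in> R \<and> (x, y) \<notin> R}. scl (of_int (a x y)) (\<xi> y))"
  obtains g h where "bij_betw g {..<card B} B" and "bij_betw h {..<card B} B"
    and "upper_unitriangular_int_pm_on (card B) (\<lambda>i j. module.representation scl B (w (g j)) (h i))"
proof -
  interpret finite_dimensional_vector_space scl B by fact
  let ?n = "card B"
  define below where "below x = {y \<in> B. (y, x) \<in> R \<and> (x, y) \<notin> R}" for x
  obtain f where f: "bij_betw f {..<?n} B"
    and extends: "\<And>i j. i < ?n \<Longrightarrow> j < ?n \<Longrightarrow> (f i, f j) \<in> R \<Longrightarrow> (f j, f i) \<notin> R \<Longrightarrow> i < j"
    using finite_enumeration_extending_strict_part[OF finite_Basis \<open>trans R\<close>] by blast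
  have coord: "representation B (w (f j)) (\<xi> (f i)) =
      (if i = j then of_int (\<epsilon> (f j)) else if f i \<in> below (f j) then of_int (a (f j) (f i)) else 0)"
    if "i < ?n" "j < ?n" for i j
  proof -
    have fB: "f i \<in> B" "f j \<in> B"
      using that bij_betw_apply[OF f] by simp_all
    have "f i = f j \<longleftrightarrow> i = j"
      using that bij_betw_imp_inj_on[OF f] by (auto dest: inj_onD)
    moreover have "below (f j) \<subseteq> B" "f j \<notin> below (f j)"
      by (auto simp: below_def)
    ultimately show ?thesis
      using representation_leading_plus_lower[OF bij_betw_imp_inj_on[OF \<xi>] _ fB(2,1)]
        w[OF fB(2)] bij_betw_imp_surj_on[OF \<xi>] by (simp add: below_def)
  qed
  have "upper_unitriangular_int_pm_on ?n (\<lambda>i j. representation B (w (f j)) ((\<xi> \<circ> f) i))"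
    unfolding upper_unitriangular_int_pm_on_def
  proof (intro conjI allI impI)
    fix i j
    assume ij: "i < ?n" "j < ?n"
    show "representation B (w (f j)) ((\<xi> \<circ> f) i) \<in> \<int>"
      using coord[OF ij] by simp
    assume "j < i"
    moreover have "f i \<notin> below (f j)"
      using extends[OF ij] \<open>j < i\<close> by (auto simp: below_def)
    ultimately show "representation B (w (f j)) ((\<xi> \<circ> f) i) = 0"
      using coord[OF ij] by simp
  next
    fix i
    assume "i < ?n"
    then show "representation B (w (f i)) ((\<xi> \<circ> f) i) = 1 \<or> representation B (w (f i)) ((\<xi> \<circ> f) i) = -1"
      using coord \<epsilon> bij_betw_apply[OF f] by force
  qed
  with f bij_betw_trans[OF f \<xi>] show ?thesis
    by (rule that)
qed

lemma acts_by_bij_up_to_lower_iff_upper_unitriangular: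
  fixes scl :: "complex \<Rightarrow> 'u::ab_group_add \<Rightarrow> 'u"
  assumes V: "finite_dimensional_vector_space scl B"
  shows "acts_by_bij_up_to_lower scl B w \<longleftrightarrow>
    (\<exists>g h. bij_betw g {..<card B} B \<and> bij_betw h {..<card B} B \<and>
       upper_unitriangular_int_pm_on (card B) (\<lambda>i j. module.representation scl B (w (g j)) (h i)))"
proof
  assume "acts_by_bij_up_to_lower scl B w"
  then obtain \<xi> R \<epsilon> where \<xi>: "bij_betw \<xi> B B" and R: "preorder_on B R"
    and \<epsilon>: "\<forall>x\<in>B. \<epsilon> x = (1::int) \<or> \<epsilon> x = -1"
    and comb: "\<forall>x\<in>B. \<exists>a::'u \<Rightarrow> int. w x = scl (of_int (\<epsilon> x)) (\<xi> x) +
        (\<Sum>y\<in>{y \<in> B. (y, x) \<in> R \<and> (x, y) \<notin> R}. scl (of_int (a y)) (\<xi> y))"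
    unfolding acts_by_bij_up_to_lower_def by blast
  obtain a where "\<And>x. x \<in> B \<Longrightarrow> w x = scl (of_int (\<epsilon> x)) (\<xi> x) +
      (\<Sum>y\<in>{y \<in> B. (y, x) \<in> R \<and> (x, y) \<notin> R}. scl (of_int (a x y)) (\<xi> y))"
    using bchoice[OF comb] by blast
  moreover have "trans R"
    using R by (simp add: preorder_on_def)
  ultimately show "\<exists>g h. bij_betw g {..<card B} B \<and> bij_betw h {..<card B} B \<and>
      upper_unitriangular_int_pm_on (card B) (\<lambda>i j. module.representation scl B (w (g j)) (h i))"
    using upper_unitriangular_if_leading_plus_lower[OF V \<xi>, of R \<epsilon> w a] \<epsilon> by blast
next
  assume "\<exists>g h. bij_betw g {..<card B} B \<and> bij_betw h {..<card B} B \<and>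
      upper_unitriangular_int_pm_on (card B) (\<lambda>i j. module.representation scl B (w (g j)) (h i))"
  then show "acts_by_bij_up_to_lower scl B w"
    using acts_by_bij_up_to_lower_if_upper_unitriangular[OF V] by blast
qed

lemma ex_permutes_matrix_wrt_iff:
  assumes e: "bij_betw e {..<card B} B"
  shows "(\<exists>p q. p permutes {..<card B} \<and> q permutes {..<card B} \<and>
            upper_unitriangular_int_pm_on (card B) (\<lambda>i j. matrix_wrt scl B e w $$ (p i, q j))) \<longleftrightarrow>
         (\<exists>g h. bij_betw g {..<card B} B \<and> bij_betw h {..<card B} B \<and>
            upper_unitriangular_int_pm_on (card B) (\<lambda>i j. module.representation scl B (w (g j)) (h i)))"
    (is "?permuted \<longleftrightarrow> ?reordered")
proof -
  let ?n = "card B"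
  have permuted_iff:
    "upper_unitriangular_int_pm_on ?n (\<lambda>i j. matrix_wrt scl B e w $$ (p i, q j)) \<longleftrightarrow>
     upper_unitriangular_int_pm_on ?n (\<lambda>i j. module.representation scl B (w ((e \<circ> q) j)) ((e \<circ> p) i))"
    if "p permutes {..<?n}" "q permutes {..<?n}" for p q
    using permutes_in_image[OF that(1)] permutes_in_image[OF that(2)]
    by (intro upper_unitriangular_int_pm_on_cong) (simp add: matrix_wrt_def)
  show ?thesis
  proof
    assume ?permuted
    then obtain p q where "p permutes {..<?n}" "q permutes {..<?n}"
      "upper_unitriangular_int_pm_on ?n (\<lambda>i j. matrix_wrt scl B e w $$ (p i, q j))"
      by blast
    then show ?reordered
      using permuted_iff bij_betw_trans[OF permutes_imp_bij e] by blast
  next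
    assume ?reordered
    then obtain g h where g: "bij_betw g {..<?n} B" and h: "bij_betw h {..<?n} B"
      and U: "upper_unitriangular_int_pm_on ?n (\<lambda>i j. module.representation scl B (w (g j)) (h i))"
      by blast
    obtain q where q: "q permutes {..<?n}" "\<And>i. i < ?n \<Longrightarrow> g i = e (q i)"
      using bij_betw_lessThan_factor_permutes[OF e g] by blast
    obtain p where p: "p permutes {..<?n}" "\<And>i. i < ?n \<Longrightarrow> h i = e (p i)"
      using bij_betw_lessThan_factor_permutes[OF e h] by blast
    have "upper_unitriangular_int_pm_on ?n (\<lambda>i j. module.representation scl B (w ((e \<circ> q) j)) ((e \<circ> p) i))"
      using U p(2) q(2) by (simp cong: upper_unitriangular_int_pm_on_cong)
    then show ?permuted
      using permuted_iff[OF p(1) q(1)] p(1) q(1) by blast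
  qed
qed

theorem corollaryA3:
  fixes scl :: "complex \<Rightarrow> 'u::ab_group_add \<Rightarrow> 'u"
    and B :: "'u set" and w :: "'u \<Rightarrow> 'u" and e :: "nat \<Rightarrow> 'u"
  assumes "finite_dimensional_vector_space scl B"
    and "Vector_Spaces.linear scl scl w"
    and "bij_betw e {..<card B} B"
  shows "acts_by_bij_up_to_lower scl B w \<longleftrightarrow>
    (\<exists>P1 P2. is_permutation_matrix (card B) P1 \<and> is_permutation_matrix (card B) P2 \<and>
       upper_unitriangular_int_pm (P1 * matrix_wrt scl B e w * P2))"
proof -
  have A: "matrix_wrt scl B e w \<in> carrier_mat (card B) (card B)"
    unfolding matrix_wrt_def by (rule mat_carrier)
  have "acts_by_bij_up_to_lower scl B w \<longleftrightarrow>
    (\<exists>g h. bij_betw g {..<card B} B \<and> bij_betw h {..<card B} B \<and>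
       upper_unitriangular_int_pm_on (card B) (\<lambda>i j. module.representation scl B (w (g j)) (h i)))"
    using assms(1) by (rule acts_by_bij_up_to_lower_iff_upper_unitriangular)
  also have "\<dots> \<longleftrightarrow> (\<exists>p q. p permutes {..<card B} \<and> q permutes {..<card B} \<and>
      upper_unitriangular_int_pm_on (card B) (\<lambda>i j. matrix_wrt scl B e w $$ (p i, q j)))"
    using assms(3) by (rule ex_permutes_matrix_wrt_iff[symmetric])
  also have "\<dots> \<longleftrightarrow> (\<exists>P1 P2. is_permutation_matrix (card B) P1 \<and> is_permutation_matrix (card B) P2 \<and>
      upper_unitriangular_int_pm (P1 * matrix_wrt scl B e w * P2))"
    using A by (rule ex_perm_matrices_upper_unitriangular_int_pm_iff[symmetric])
  finally show ?thesis .
qed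

end
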